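(* Let $a,b$ be integers with $0<a<b$, let $\gamma_1<\gamma_2<\cdots$ be the greedy dissociated sequence starting from $a,b$, and let $n_0(a,b)$ be the least integer such that $\gamma_n=2\gamma_{n-1}$ for all $n\ge n_0(a,b)$. Then $$n_0(a,b)\le L+2K+5,$$ where $L:=\lceil\log_2(2b+2)\rceil$ and $K:=\lceil\log_2 L\rceil$.
   Context: A set $\mathcal S\subseteq\mathbb N$ is dissociated if all of its finite subsets have different sums. The greedy dissociated sequence starting from $a,b$ is defined by $\gamma_1=a$, $\gamma_2=b$, and for $r\ge 3$, $\gamma_r$ is the smallest integer greater than $\gamma_{r-1}$ such that $\{\gamma_1,\dots,\gamma_r\}$ is dissociated. It is known that $\gamma_n=2\gamma_{n-1}$ for all sufficiently large $n$, so $n_0(a,b)$ is well defined. *)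

theory Defs
  imports Complex_Main
begin

definition dissociated :: "nat set \<Rightarrow> bool" where
  "dissociated S \<longleftrightarrow>
     (\<forall>A B. A \<subseteq> S \<and> B \<subseteq> S \<and> finite A \<and> finite B \<and> \<Sum>A = \<Sum>B \<longrightarrow> A = B)"

fun greedy_list :: "nat \<Rightarrow> nat \<Rightarrow> nat \<Rightarrow> nat list" where
  "greedy_list a b 0 = []"
| "greedy_list a b (Suc 0) = [a]"
| "greedy_list a b (Suc (Suc 0)) = [a, b]"
| "greedy_list a b (Suc (Suc (Suc n))) =
     (let xs = greedy_list a b (Suc (Suc n)) in
      xs @ [LEAST x. last xs < x \<and> dissociated (insert x (set xs))])"

text \<open>gamma a b r is the r-th term (1-indexed, r \<ge> 1) of the greedy dissociated sequence.\<close>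
definition gamma :: "nat \<Rightarrow> nat \<Rightarrow> nat \<Rightarrow> nat" where
  "gamma a b r = last (greedy_list a b r)"

text \<open>n_0(a,b): least n0 (with n0 \<ge> 2, so that gamma (n-1) is defined) such that
  gamma n = 2 gamma (n-1) for all n \<ge> n0.\<close>
definition n0 :: "nat \<Rightarrow> nat \<Rightarrow> nat" where
  "n0 a b = (LEAST m. 2 \<le> m \<and> (\<forall>n\<ge>m. gamma a b n = 2 * gamma a b (n - 1)))"

end

(* Let D_r be the set of differences of two subset sums of {gamma_1, ..., gamma_r}, and S_r the
   sum of these terms. Adjoining x to a dissociated set keeps it dissociated iff x is not in D_r,
   so gamma_(r+1) is the least integer above gamma_r outside D_r.

   Suppose D_r contains every x > 0 with 2 x <= S_r + 1. Then gamma_(r+1) > (S_r + 1) / 2, so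
   D_(r+1) contains every x with 0 < x < 2 gamma_(r+1) but not 2 gamma_(r+1), whence
   gamma_(r+2) = 2 gamma_(r+1), and the hypothesis propagates to r + 1.

   If instead D_r has a hole x with 2 x <= S_r + 1, the subset sums and their shifts by x are
   2^(r+1) distinct numbers, so 2^(r+2) <= 3 (S_r + 1). But S_r = O(b r^2): either D_r has a hole
   below b, which keeps every step gamma_(i+1) - gamma_i below b, or D_r contains all of
   [1, gamma_(r+1)), and from the first index where this happens the sequence at least doubles.
   Hence 2^(r+1) <= 3 b r^2, which fails for r = L + 2 K + 3. *)

theory Submission
  imports Defs
begin

definition subset_sum_diffs :: "nat set \<Rightarrow> int set" where
  "subset_sum_diffs G = {int (\<Sum>A) - int (\<Sum>B) | A B. A \<subseteq> G \<and> B \<subseteq> G}"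

lemma subset_sum_diffsI:
  "A \<subseteq> G \<Longrightarrow> B \<subseteq> G \<Longrightarrow> e = int (\<Sum>A) - int (\<Sum>B) \<Longrightarrow> e \<in> subset_sum_diffs G"
  unfolding subset_sum_diffs_def by blast

lemma subset_sum_diffsE:
  assumes "e \<in> subset_sum_diffs G"
  obtains A B where "A \<subseteq> G" "B \<subseteq> G" "e = int (\<Sum>A) - int (\<Sum>B)"
  using assms unfolding subset_sum_diffs_def by blast

lemma zero_mem_subset_sum_diffs: "0 \<in> subset_sum_diffs G"
  by (rule subset_sum_diffsI[of "{}" _ "{}"]) auto

lemma of_nat_mem_subset_sum_diffs: "y \<in> G \<Longrightarrow> int y \<in> subset_sum_diffs G"
  by (rule subset_sum_diffsI[of "{y}" _ "{}"]) auto

lemma uminus_mem_subset_sum_diffs: "e \<in> subset_sum_diffs G \<Longrightarrow> - e \<in> subset_sum_diffs G"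
  by (erule subset_sum_diffsE) (rule subset_sum_diffsI, assumption+, simp)

lemma subset_sum_diffs_mono: "G \<subseteq> H \<Longrightarrow> subset_sum_diffs G \<subseteq> subset_sum_diffs H"
  unfolding subset_sum_diffs_def by blast

lemma abs_le_Sum_if_mem_subset_sum_diffs:
  assumes "finite G" "e \<in> subset_sum_diffs G"
  shows "\<bar>e\<bar> \<le> int (\<Sum>G)"
proof -
  obtain A B where "A \<subseteq> G" "B \<subseteq> G" "e = int (\<Sum>A) - int (\<Sum>B)"
    using assms(2) by (rule subset_sum_diffsE)
  moreover from calculation have "\<Sum>A \<le> \<Sum>G" "\<Sum>B \<le> \<Sum>G"
    using assms(1) by (auto intro: sum_mono2)
  ultimately show ?thesis by linarith
qed

lemma int_Sum_remove:
  "finite A \<Longrightarrow> int (\<Sum>A) = int (\<Sum>(A - {y})) + (if y \<in> A then int y else 0)"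
  by (cases "y \<in> A") (simp_all add: sum.remove del: of_nat_sum)

lemma subset_sum_diffs_insert:
  assumes "finite G" "y \<notin> G"
  shows "subset_sum_diffs (insert y G) =
    subset_sum_diffs G \<union> (\<lambda>e. e + int y) ` subset_sum_diffs G \<union> (\<lambda>e. e - int y) ` subset_sum_diffs G"
    (is "?D' = ?D \<union> ?plus \<union> ?minus")
proof (intro equalityI subsetI)
  fix e assume "e \<in> ?D'"
  then obtain A B where AB: "A \<subseteq> insert y G" "B \<subseteq> insert y G" and e: "e = int (\<Sum>A) - int (\<Sum>B)"
    by (rule subset_sum_diffsE)
  define e' where "e' = int (\<Sum>(A - {y})) - int (\<Sum>(B - {y}))"
  have "e' \<in> ?D" unfolding e'_def using AB by (intro subset_sum_diffsI[of "A - {y}" _ "B - {y}"]) auto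
  moreover have "finite A" "finite B" using AB assms(1) finite_subset by auto
  then have "e = e' + (if y \<in> A then int y else 0) - (if y \<in> B then int y else 0)"
    using int_Sum_remove[of A y] int_Sum_remove[of B y] unfolding e e'_def by linarith
  ultimately show "e \<in> ?D \<union> ?plus \<union> ?minus" by (auto split: if_splits)
next
  have plus: "e + int y \<in> ?D'" and minus: "e - int y \<in> ?D'" if "e \<in> ?D" for e
  proof -
    obtain A B where AB: "A \<subseteq> G" "B \<subseteq> G" and e: "e = int (\<Sum>A) - int (\<Sum>B)"
      using \<open>e \<in> ?D\<close> by (rule subset_sum_diffsE)
    have "finite A" "finite B" "y \<notin> A" "y \<notin> B" using AB assms finite_subset by auto
    then have plus_eq: "e + int y = int (\<Sum>(insert y A)) - int (\<Sum>B)"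
      and minus_eq: "e - int y = int (\<Sum>A) - int (\<Sum>(insert y B))" by (simp_all add: e)
    show "e + int y \<in> ?D'" by (rule subset_sum_diffsI[OF _ _ plus_eq]) (use AB in auto)
    show "e - int y \<in> ?D'" by (rule subset_sum_diffsI[OF _ _ minus_eq]) (use AB in auto)
  qed
  fix e assume "e \<in> ?D \<union> ?plus \<union> ?minus"
  then show "e \<in> ?D'"
    by (elim UnE imageE) (use plus minus subset_sum_diffs_mono[of G "insert y G"] in auto)
qed

lemma dissociatedD:
  "dissociated S \<Longrightarrow> \<Sum>A = \<Sum>B \<Longrightarrow> A \<subseteq> S \<Longrightarrow> B \<subseteq> S \<Longrightarrow> finite A \<Longrightarrow> finite B \<Longrightarrow> A = B"
  unfolding dissociated_def by blast

lemma dissociated_subset: "A \<subseteq> B \<Longrightarrow> dissociated B \<Longrightarrow> dissociated A"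
  unfolding dissociated_def by (meson order.trans)

lemma dissociated_insert_iff:
  assumes fin: "finite G" and dis: "dissociated G" and "x \<notin> G"
  shows "dissociated (insert x G) \<longleftrightarrow> int x \<notin> subset_sum_diffs G"
proof
  assume dis': "dissociated (insert x G)"
  show "int x \<notin> subset_sum_diffs G"
  proof
    assume "int x \<in> subset_sum_diffs G"
    then obtain A B where AB: "A \<subseteq> G" "B \<subseteq> G" and "int x = int (\<Sum>A) - int (\<Sum>B)"
      by (rule subset_sum_diffsE)
    moreover have "finite A" "finite B" "x \<notin> A" "x \<notin> B" using AB fin \<open>x \<notin> G\<close> finite_subset by auto
    ultimately have "\<Sum>A = x + \<Sum>B" by linarith
    then have "\<Sum>(insert x B) = \<Sum>A" using \<open>finite B\<close> \<open>x \<notin> B\<close> by simp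
    then have "insert x B = A" by (rule dissociatedD[OF dis']) (use AB \<open>finite A\<close> \<open>finite B\<close> in auto)
    then show False using \<open>x \<notin> A\<close> by blast
  qed
next
  assume hole: "int x \<notin> subset_sum_diffs G"
  show "dissociated (insert x G)"
    unfolding dissociated_def
  proof (intro allI impI, elim conjE)
    fix A B assume AB: "A \<subseteq> insert x G" "B \<subseteq> insert x G" "finite A" "finite B" "\<Sum>A = \<Sum>B"
    define d where "d = int (\<Sum>(A - {x})) - int (\<Sum>(B - {x}))"
    have d_mem: "d \<in> subset_sum_diffs G"
      unfolding d_def using AB by (intro subset_sum_diffsI[of "A - {x}" _ "B - {x}"]) auto
    have d: "d = (if x \<in> B then int x else 0) - (if x \<in> A then int x else 0)"
      using AB int_Sum_remove[of A x] int_Sum_remove[of B x] unfolding d_def by linarith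
    consider "x \<in> A \<longleftrightarrow> x \<in> B" | "x \<in> A" "x \<notin> B" | "x \<notin> A" "x \<in> B" by blast
    then show "A = B"
    proof cases
      case 1
      then have "d = 0" using d by simp
      then have "\<Sum>(A - {x}) = \<Sum>(B - {x})" unfolding d_def by linarith
      then have "A - {x} = B - {x}" by (rule dissociatedD[OF dis]) (use AB in auto)
      with 1 show ?thesis by blast
    next
      case 2
      then have "int x = - d" using d by simp
      with uminus_mem_subset_sum_diffs[OF d_mem] hole show ?thesis by simp
    next
      case 3
      then have "int x = d" using d by simp
      with d_mem hole show ?thesis by simp
    qed
  qed
qed

lemma dissociated_empty: "dissociated {}"
  unfolding dissociated_def by blast

lemma dissociated_insert_if_Sum_less:
  assumes "finite G" "dissociated G" "\<Sum>G < x"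
  shows "dissociated (insert x G)"
proof -
  have "x \<notin> G" using assms member_le_sum[of x G id] by fastforce
  moreover have "int x \<notin> subset_sum_diffs G"
  proof
    assume "int x \<in> subset_sum_diffs G"
    from abs_le_Sum_if_mem_subset_sum_diffs[OF assms(1) this] assms(3) show False by linarith
  qed
  ultimately show ?thesis using dissociated_insert_iff assms(1,2) by blast
qed

text \<open>The \<open>2 ^ card G\<close> subset sums and their shifts by a non-difference \<open>x\<close> are
  pairwise distinct numbers in \<open>{0..\<Sum>G + x}\<close>.\<close>
lemma dissociated_two_pow_card_le:
  assumes fin: "finite G" and dis: "dissociated G" and hole: "int x \<notin> subset_sum_diffs G"
  shows "2 * 2 ^ card G \<le> \<Sum>G + x + 1"
proof -
  define P where "P = (\<lambda>A. \<Sum>A) ` Pow G"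
  define Q where "Q = (\<lambda>p. p + x) ` P"
  have "inj_on (\<lambda>A. \<Sum>A) (Pow G)"
    using fin by (intro inj_onI dissociatedD[OF dis]) (auto intro: finite_subset)
  then have card_P: "card P = 2 ^ card G" unfolding P_def by (simp add: card_image card_Pow fin)
  have card_Q: "card Q = card P" unfolding Q_def by (simp add: card_image)
  have "P \<subseteq> {0..\<Sum>G}" unfolding P_def using fin by (auto intro: sum_mono2)
  then have PQ: "P \<union> Q \<subseteq> {0..\<Sum>G + x}" unfolding Q_def by auto
  have "P \<inter> Q = {}"
  proof (rule ccontr)
    assume "P \<inter> Q \<noteq> {}"
    then obtain A B where "A \<subseteq> G" "B \<subseteq> G" "\<Sum>A = \<Sum>B + x" unfolding P_def Q_def by auto
    then have "int x \<in> subset_sum_diffs G" by (intro subset_sum_diffsI[of A G B]) auto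
    with hole show False ..
  qed
  then have "card P + card Q = card (P \<union> Q)"
    by (intro card_Un_disjoint[symmetric]) (use fin in \<open>auto simp: P_def Q_def\<close>)
  also have "\<dots> \<le> card {0..\<Sum>G + x}" using PQ by (intro card_mono) auto
  finally show ?thesis using card_P card_Q by simp
qed

locale greedy_dissociated =
  fixes a b :: nat
  assumes a_pos: "0 < a" and a_less_b: "a < b"
begin

abbreviation \<gamma> :: "nat \<Rightarrow> nat" where
  "\<gamma> \<equiv> gamma a b"

definition G :: "nat \<Rightarrow> nat set" where
  "G r = set (greedy_list a b r)"

abbreviation S :: "nat \<Rightarrow> nat" where
  "S r \<equiv> \<Sum>(G r)"

abbreviation D :: "nat \<Rightarrow> int set" where
  "D r \<equiv> subset_sum_diffs (G r)"

lemma greedy_list_Suc: "greedy_list a b (Suc r) = greedy_list a b r @ [\<gamma> (Suc r)]"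
  by (cases "(a, b, r)" rule: greedy_list.cases)
    (simp_all add: gamma_def Let_def)

lemma G_0 [simp]: "G 0 = {}"
  by (simp add: G_def)

lemma G_Suc: "G (Suc r) = insert (\<gamma> (Suc r)) (G r)"
  by (simp add: G_def greedy_list_Suc)

lemma finite_G [simp]: "finite (G r)"
  by (simp add: G_def)

lemma \<gamma>_Suc_0 [simp]: "\<gamma> (Suc 0) = a"
  by (simp add: gamma_def)

lemma \<gamma>_2 [simp]: "\<gamma> 2 = b"
  by (simp add: gamma_def numeral_2_eq_2)

lemma \<gamma>_Suc_eq_Least:
  "2 \<le> r \<Longrightarrow> \<gamma> (Suc r) = (LEAST x. \<gamma> r < x \<and> dissociated (insert x (G r)))"
  by (cases "(a, b, r)" rule: greedy_list.cases)
    (simp_all add: gamma_def G_def Let_def)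

lemma G_eq_image: "G r = \<gamma> ` {1..r}"
  by (induction r) (auto simp: G_Suc atLeastAtMostSuc_conv)

lemma \<gamma>_mem_G: "1 \<le> i \<Longrightarrow> i \<le> r \<Longrightarrow> \<gamma> i \<in> G r"
  by (simp add: G_eq_image)

lemma \<gamma>_le_S: "1 \<le> r \<Longrightarrow> \<gamma> r \<le> S r"
  using member_le_sum[of "\<gamma> r" "G r" id] \<gamma>_mem_G by simp

lemma \<gamma>_Suc_gt_and_dissociated:
  assumes "2 \<le> r" "dissociated (G r)"
  shows "\<gamma> r < \<gamma> (Suc r) \<and> dissociated (G (Suc r))"
proof -
  have "\<gamma> r < S r + 1 \<and> dissociated (insert (S r + 1) (G r))"
    using \<gamma>_le_S[of r] assms by (auto intro: dissociated_insert_if_Sum_less)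
  then have "\<gamma> r < \<gamma> (Suc r) \<and> dissociated (insert (\<gamma> (Suc r)) (G r))"
    unfolding \<gamma>_Suc_eq_Least[OF assms(1)] by (rule LeastI)
  then show ?thesis by (simp add: G_Suc)
qed

lemma dissociated_G: "dissociated (G r)"
proof -
  have dis: "dissociated (G r)" if "2 \<le> r" for r
    using that
  proof (induction r rule: dec_induct)
    case base
    have "G 2 = insert b (insert a {})" by (auto simp: G_def numeral_2_eq_2)
    then show ?case
      using a_pos a_less_b by (simp add: dissociated_insert_if_Sum_less dissociated_empty)
  next
    case (step r)
    then show ?case using \<gamma>_Suc_gt_and_dissociated by blast
  qed
  show ?thesis
  proof (cases "2 \<le> r")
    case False
    then have "G r \<subseteq> G 2" by (auto simp: G_eq_image)
    then show ?thesis using dis[of 2] by (simp add: dissociated_subset)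
  qed (rule dis)
qed

lemma \<gamma>_less_Suc: "1 \<le> r \<Longrightarrow> \<gamma> r < \<gamma> (Suc r)"
proof (cases "r = 1")
  case True
  with a_less_b \<gamma>_2 show ?thesis by (simp add: numeral_2_eq_2)
qed (use \<gamma>_Suc_gt_and_dissociated[OF _ dissociated_G] in simp)

lemma \<gamma>_strict_mono:
  assumes "1 \<le> i" "i < j"
  shows "\<gamma> i < \<gamma> j"
proof -
  have "Suc i \<le> j" using assms(2) by simp
  then show ?thesis
  proof (induction j rule: dec_induct)
    case base
    show ?case using \<gamma>_less_Suc[OF assms(1)] .
  next
    case (step j)
    then show ?case using \<gamma>_less_Suc[of j] by simp
  qed
qed

lemma \<gamma>_pos: "1 \<le> r \<Longrightarrow> 0 < \<gamma> r"
  using \<gamma>_strict_mono[of 1 r] a_pos by (cases "r = 1") auto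

lemma le_\<gamma>_if_mem_G:
  assumes "x \<in> G r"
  shows "x \<le> \<gamma> r"
proof -
  obtain i where "x = \<gamma> i" "1 \<le> i" "i \<le> r" using assms by (auto simp: G_eq_image)
  then show ?thesis using \<gamma>_strict_mono[of i r] by (cases "i = r") auto
qed

lemma \<gamma>_Suc_notin_G: "\<gamma> (Suc r) \<notin> G r"
proof
  assume "\<gamma> (Suc r) \<in> G r"
  moreover from this have "1 \<le> r" by (auto simp: G_eq_image)
  ultimately show False using le_\<gamma>_if_mem_G \<gamma>_less_Suc[of r] by fastforce
qed

lemma card_G: "card (G r) = r"
  by (induction r) (simp_all add: G_Suc \<gamma>_Suc_notin_G)

lemma S_Suc: "S (Suc r) = S r + \<gamma> (Suc r)"
  by (simp add: G_Suc \<gamma>_Suc_notin_G)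

lemma S_Suc_0 [simp]: "S (Suc 0) = a"
  using S_Suc[of 0] by simp

lemma S_2: "S 2 = a + b"
  using S_Suc[of 1] \<gamma>_2 by (simp add: numeral_2_eq_2)

lemma D_Suc:
  "D (Suc r) = D r \<union> (\<lambda>e. e + int (\<gamma> (Suc r))) ` D r \<union> (\<lambda>e. e - int (\<gamma> (Suc r))) ` D r"
  unfolding G_Suc by (rule subset_sum_diffs_insert) (simp_all add: \<gamma>_Suc_notin_G)

lemma D_mono: "r \<le> s \<Longrightarrow> D r \<subseteq> D s"
  by (intro subset_sum_diffs_mono) (auto simp: G_eq_image)

lemma \<gamma>_mem_D: "1 \<le> i \<Longrightarrow> i \<le> r \<Longrightarrow> int (\<gamma> i) \<in> D r"
  by (intro of_nat_mem_subset_sum_diffs \<gamma>_mem_G)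

lemma \<gamma>_Suc_notin_D: "int (\<gamma> (Suc r)) \<notin> D r"
  using dissociated_G[of "Suc r"] dissociated_insert_iff[OF finite_G dissociated_G \<gamma>_Suc_notin_G]
  by (simp add: G_Suc)

lemma \<gamma>_Suc_eq_Least_notin_D:
  assumes "2 \<le> r"
  shows "\<gamma> (Suc r) = (LEAST x. \<gamma> r < x \<and> int x \<notin> D r)"
proof -
  have "dissociated (insert x (G r)) \<longleftrightarrow> int x \<notin> D r" if "\<gamma> r < x" for x
    using that le_\<gamma>_if_mem_G by (intro dissociated_insert_iff dissociated_G) force+
  then show ?thesis
    unfolding \<gamma>_Suc_eq_Least[OF assms] by metis
qed

lemma mem_D_if_between:
  "2 \<le> r \<Longrightarrow> \<gamma> r \<le> y \<Longrightarrow> y < \<gamma> (Suc r) \<Longrightarrow> int y \<in> D r"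
  using not_less_Least[of y "\<lambda>x. \<gamma> r < x \<and> int x \<notin> D r"] \<gamma>_Suc_eq_Least_notin_D \<gamma>_mem_D[of r r]
  by (cases "y = \<gamma> r") auto

lemma \<gamma>_Suc_le_if_notin_D:
  "2 \<le> r \<Longrightarrow> \<gamma> r < x \<Longrightarrow> int x \<notin> D r \<Longrightarrow> \<gamma> (Suc r) \<le> x"
  using Least_le[of "\<lambda>x. \<gamma> r < x \<and> int x \<notin> D r" x] \<gamma>_Suc_eq_Least_notin_D by auto

lemma \<gamma>_Suc_le_S: "2 \<le> r \<Longrightarrow> \<gamma> (Suc r) \<le> S r + 1"
proof -
  assume r: "2 \<le> r"
  have "int (S r + 1) \<notin> D r"
    using abs_le_Sum_if_mem_subset_sum_diffs[OF finite_G, of "int (S r + 1)" r] by auto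
  moreover have "\<gamma> r < S r + 1" using \<gamma>_le_S[of r] r by simp
  ultimately show ?thesis using \<gamma>_Suc_le_if_notin_D r by blast
qed

lemma two_pow_le_if_notin_D: "int x \<notin> D r \<Longrightarrow> 2 * 2 ^ r \<le> S r + x + 1"
  using dissociated_two_pow_card_le[OF finite_G dissociated_G] by (simp add: card_G)

lemma pos_if_notin_D: "int x \<notin> D r \<Longrightarrow> 0 < x"
  using zero_mem_subset_sum_diffs by (cases x) auto

lemma \<gamma>_less_if_notin_D:
  assumes "2 \<le> r" "b < x" "int x \<notin> D r"
  shows "\<gamma> r < x"
  using assms
proof (induction r rule: dec_induct)
  case base
  then show ?case by simp
next
  case (step r)
  then have "int x \<notin> D r" using D_mono[of r "Suc r"] by auto
  with step have "\<gamma> (Suc r) \<le> x" using \<gamma>_Suc_le_if_notin_D by blast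
  moreover have "\<gamma> (Suc r) \<noteq> x" using \<gamma>_mem_D[of "Suc r" "Suc r"] step.prems by auto
  ultimately show ?case by simp
qed

text \<open>Otherwise \<open>\<gamma> (Suc i) - x\<close> lies in \<open>[\<gamma> i, \<gamma> (Suc i))\<close>, hence in \<open>D i\<close>, and
  subtracting \<open>\<gamma> (Suc i)\<close> puts \<open>x\<close> into \<open>D (Suc i) \<subseteq> D r\<close>.\<close>
lemma \<gamma>_Suc_less_add_if_notin_D:
  assumes i: "2 \<le> i" "i < r" and hole: "int x \<notin> D r"
  shows "\<gamma> (Suc i) < \<gamma> i + x"
proof (rule ccontr)
  assume "\<not> \<gamma> (Suc i) < \<gamma> i + x"
  moreover have "0 < x" using hole by (rule pos_if_notin_D)
  ultimately have "int (\<gamma> (Suc i) - x) \<in> D i" using i(1) by (intro mem_D_if_between) auto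
  then have "int (\<gamma> (Suc i) - x) - int (\<gamma> (Suc i)) \<in> D (Suc i)" by (simp add: D_Suc)
  then have "int x \<in> D (Suc i)"
    using uminus_mem_subset_sum_diffs \<open>\<not> \<gamma> (Suc i) < \<gamma> i + x\<close> by fastforce
  then show False using hole D_mono[of "Suc i" r] i(2) by auto
qed

lemma \<gamma>_bound_if_small_notin_D:
  assumes "2 \<le> i" "i \<le> j" "x < b" "int x \<notin> D j"
  shows "\<gamma> i + b \<le> i * b"
  using assms
proof (induction i rule: dec_induct)
  case base
  then show ?case by simp
next
  case (step i)
  then have "\<gamma> (Suc i) < \<gamma> i + x" by (intro \<gamma>_Suc_less_add_if_notin_D) auto
  with step show ?case by simp
qed

lemma S_bound_if_small_notin_D:
  assumes "2 \<le> j" "x < b" "int x \<notin> D j"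
  shows "2 * S j + b * j \<le> 2 * a + b * j * j"
proof -
  have "2 * S m + b * m \<le> 2 * a + b * m * m" if "1 \<le> m" "m \<le> j" for m
    using that
  proof (induction m rule: dec_induct)
    case base
    then show ?case by simp
  next
    case (step m)
    then have "\<gamma> (Suc m) + b \<le> Suc m * b"
      using assms by (intro \<gamma>_bound_if_small_notin_D) auto
    with step show ?case by (simp add: S_Suc algebra_simps)
  qed
  with assms show ?thesis by simp
qed

definition covers_below_next :: "nat \<Rightarrow> bool" where
  "covers_below_next r \<longleftrightarrow> (\<forall>x. 0 < x \<longrightarrow> x < \<gamma> (Suc r) \<longrightarrow> int x \<in> D r)"

lemma small_notin_D_if_not_covers:
  assumes "2 \<le> r" "\<not> covers_below_next r"
  obtains x where "x < b" "int x \<notin> D r"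
proof -
  obtain x where x: "x < \<gamma> (Suc r)" "int x \<notin> D r"
    using assms(2) unfolding covers_below_next_def by auto
  have "x \<noteq> b" using \<gamma>_mem_D[of 2 r] assms(1) x(2) by auto
  moreover have "\<not> b < x"
    using \<gamma>_less_if_notin_D[OF assms(1) _ x(2)] mem_D_if_between[OF assms(1) _ x(1)] x(2) by fastforce
  ultimately have "x < b" by simp
  then show ?thesis using x(2) by (rule that)
qed

lemma S_bound_if_not_covers:
  "2 \<le> j \<Longrightarrow> \<not> covers_below_next j \<Longrightarrow> 2 * S j + b * j \<le> 2 * a + b * j * j"
  by (metis small_notin_D_if_not_covers S_bound_if_small_notin_D)

lemma mem_D_Suc_if_covers:
  assumes "covers_below_next r" "0 < x" "x < 2 * \<gamma> (Suc r)"
  shows "int x \<in> D (Suc r)"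
proof -
  consider "x < \<gamma> (Suc r)" | "x = \<gamma> (Suc r)" | "\<gamma> (Suc r) < x" by linarith
  then show ?thesis
  proof cases
    case 1
    then show ?thesis using assms D_mono[of r "Suc r"] unfolding covers_below_next_def by auto
  next
    case 2
    then show ?thesis using \<gamma>_mem_D[of "Suc r" "Suc r"] by simp
  next
    case 3
    then have "0 < x - \<gamma> (Suc r)" "x - \<gamma> (Suc r) < \<gamma> (Suc r)" using assms(3) by auto
    then have "int (x - \<gamma> (Suc r)) \<in> D r" using assms(1) unfolding covers_below_next_def by blast
    then have "int (x - \<gamma> (Suc r)) + int (\<gamma> (Suc r)) \<in> D (Suc r)" by (simp add: D_Suc)
    with 3 show ?thesis by simp
  qed
qed

lemma double_\<gamma>_Suc_le_if_covers:
  assumes "covers_below_next r"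
  shows "2 * \<gamma> (Suc r) \<le> \<gamma> (Suc (Suc r))"
proof (rule ccontr)
  assume "\<not> 2 * \<gamma> (Suc r) \<le> \<gamma> (Suc (Suc r))"
  then have "int (\<gamma> (Suc (Suc r))) \<in> D (Suc r)"
    using assms \<gamma>_pos[of "Suc (Suc r)"] by (intro mem_D_Suc_if_covers) auto
  with \<gamma>_Suc_notin_D show False by blast
qed

lemma covers_below_next_Suc:
  assumes "2 \<le> r" "covers_below_next r"
  shows "covers_below_next (Suc r)"
  unfolding covers_below_next_def
proof (intro allI impI)
  fix x assume x: "0 < x" "x < \<gamma> (Suc (Suc r))"
  show "int x \<in> D (Suc r)"
  proof (cases "x < \<gamma> (Suc r)")
    case True
    then show ?thesis using assms(2) x D_mono[of r "Suc r"] unfolding covers_below_next_def by auto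
  next
    case False
    then show ?thesis using mem_D_if_between[of "Suc r" x] assms(1) x by simp
  qed
qed

lemma covers_below_next_mono:
  assumes "2 \<le> k" "covers_below_next k" "k \<le> m"
  shows "covers_below_next m"
  using assms(3) by (induction m rule: dec_induct) (use assms covers_below_next_Suc in auto)

text \<open>Telescoping \<open>\<gamma> (Suc i) \<le> \<gamma> (Suc (Suc i)) - \<gamma> (Suc i)\<close> for \<open>k \<le> i < m\<close>.\<close>
lemma S_add_\<gamma>_le_if_covers:
  assumes "2 \<le> k" "covers_below_next k" "k \<le> m"
  shows "S m + \<gamma> (Suc k) \<le> S k + \<gamma> (Suc m)"
  using assms(3)
proof (induction m rule: dec_induct)
  case base
  then show ?case by simp
next
  case (step m)
  then have "2 * \<gamma> (Suc m) \<le> \<gamma> (Suc (Suc m))"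
    using assms covers_below_next_mono by (intro double_\<gamma>_Suc_le_if_covers) blast
  with step show ?case by (simp add: S_Suc)
qed

lemma exists_first_cover:
  assumes "2 \<le> R" "covers_below_next R"
  shows "\<exists>k. 2 \<le> k \<and> k \<le> R \<and> covers_below_next k \<and> (k = 2 \<or> \<not> covers_below_next (k - 1))"
  using assms
proof (induction R rule: dec_induct)
  case (step R)
  show ?case
  proof (cases "covers_below_next R")
    case True
    with step.IH show ?thesis by (meson le_SucI)
  next
    case False
    with step show ?thesis by (intro exI[of _ "Suc R"]) auto
  qed
qed auto

lemma S_le_at_first_cover:
  assumes "2 \<le> k" "k \<le> R" "k = 2 \<or> \<not> covers_below_next (k - 1)"
  shows "S k \<le> b * R * R"
proof (cases "k = 2")
  case True
  have "b * 2 * 2 \<le> b * R * R" using assms by (intro mult_le_mono) auto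
  moreover have "S k = a + b" using True S_2 by simp
  ultimately show ?thesis using a_less_b by linarith
next
  case False
  define j where "j = k - 1"
  have j: "2 \<le> j" "k = Suc j" "\<not> covers_below_next j" using assms False unfolding j_def by auto
  have "S k \<le> 2 * S j + 1" using S_Suc[of j] \<gamma>_Suc_le_S[OF j(1)] j(2) by simp
  moreover have "2 * S j + b * j \<le> 2 * a + b * j * j" using S_bound_if_not_covers j by simp
  moreover have "b * j * j \<le> b * R * R" using assms j by (intro mult_le_mono) auto
  moreover have "b * 2 \<le> b * j" using j(1) by simp
  ultimately show ?thesis using a_less_b by linarith
qed

definition covers_half_sum :: "nat \<Rightarrow> bool" where
  "covers_half_sum r \<longleftrightarrow> (\<forall>x. 0 < x \<longrightarrow> 2 * x \<le> S r + 1 \<longrightarrow> int x \<in> D r)"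

lemma S_less_double_\<gamma>_Suc_if_covers_half_sum:
  assumes "covers_half_sum r"
  shows "S r + 1 < 2 * \<gamma> (Suc r)"
proof (rule ccontr)
  assume "\<not> S r + 1 < 2 * \<gamma> (Suc r)"
  then have "int (\<gamma> (Suc r)) \<in> D r"
    using assms \<gamma>_pos[of "Suc r"] unfolding covers_half_sum_def by simp
  with \<gamma>_Suc_notin_D show False by blast
qed

lemma covers_below_next_if_covers_half_sum:
  assumes r: "3 \<le> r" and half: "covers_half_sum r"
  shows "covers_below_next r"
  unfolding covers_below_next_def
proof (intro allI impI)
  fix x assume x: "0 < x" "x < \<gamma> (Suc r)"
  have "\<gamma> r \<le> S (r - 1) + 1" using \<gamma>_Suc_le_S[of "r - 1"] r by simp
  moreover have "S r = S (r - 1) + \<gamma> r" using S_Suc[of "r - 1"] r by simp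
  ultimately have "2 * \<gamma> r \<le> S r + 1" by simp
  then show "int x \<in> D r"
    using half x mem_D_if_between[of r x] r unfolding covers_half_sum_def by fastforce
qed

lemma \<gamma>_Suc_Suc_eq_double:
  assumes r: "3 \<le> r" and half: "covers_half_sum r"
  shows "\<gamma> (Suc (Suc r)) = 2 * \<gamma> (Suc r)"
proof (rule antisym)
  define y where "y = \<gamma> (Suc r)"
  have y: "S r + 1 < 2 * y" "int y \<notin> D r"
    using S_less_double_\<gamma>_Suc_if_covers_half_sum[OF half] \<gamma>_Suc_notin_D unfolding y_def by auto
  have bound: "\<bar>e\<bar> \<le> int (S r)" if "e \<in> D r" for e
    using abs_le_Sum_if_mem_subset_sum_diffs[OF finite_G that] .
  have "int (2 * y) \<notin> D (Suc r)"
  proof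
    assume "int (2 * y) \<in> D (Suc r)"
    then consider "int (2 * y) \<in> D r" | "int (2 * y) - int y \<in> D r" | "int (2 * y) + int y \<in> D r"
      unfolding D_Suc y_def[symmetric] by force
    then show False
    proof cases
      case 1
      from bound[OF this] y(1) show False by linarith
    next
      case 2
      with y(2) show False by simp
    next
      case 3
      from bound[OF this] y(1) show False by linarith
    qed
  qed
  moreover have "\<gamma> (Suc r) < 2 * y" using y(1) unfolding y_def by linarith
  ultimately show "\<gamma> (Suc (Suc r)) \<le> 2 * \<gamma> (Suc r)"
    using \<gamma>_Suc_le_if_notin_D[of "Suc r"] r unfolding y_def by simp
  show "2 * \<gamma> (Suc r) \<le> \<gamma> (Suc (Suc r))"
    using covers_below_next_if_covers_half_sum[OF assms] by (rule double_\<gamma>_Suc_le_if_covers)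
qed

lemma covers_half_sum_Suc:
  assumes r: "3 \<le> r" and half: "covers_half_sum r"
  shows "covers_half_sum (Suc r)"
  unfolding covers_half_sum_def
proof (intro allI impI)
  fix x assume x: "0 < x" "2 * x \<le> S (Suc r) + 1"
  then have "x < 2 * \<gamma> (Suc r)"
    using S_Suc[of r] S_less_double_\<gamma>_Suc_if_covers_half_sum[OF half] by simp
  with x(1) show "int x \<in> D (Suc r)"
    using covers_below_next_if_covers_half_sum[OF assms] by (intro mem_D_Suc_if_covers)
qed

lemma \<gamma>_doubles_from_covers_half_sum:
  assumes "3 \<le> R" "covers_half_sum R" "R \<le> r"
  shows "\<gamma> (Suc (Suc r)) = 2 * \<gamma> (Suc r)"
proof -
  have "covers_half_sum r"
    using assms(3) by (induction r rule: dec_induct) (use assms covers_half_sum_Suc in auto)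
  with assms show ?thesis by (intro \<gamma>_Suc_Suc_eq_double) auto
qed

lemma n0_le_if_covers_half_sum:
  assumes "3 \<le> R" "covers_half_sum R"
  shows "n0 a b \<le> R + 2"
  unfolding n0_def
proof (rule Least_le, intro conjI allI impI)
  fix n assume "R + 2 \<le> n"
  then obtain r where "n = Suc (Suc r)" "R \<le> r" by (intro that[of "n - 2"]) auto
  with assms show "\<gamma> n = 2 * \<gamma> (n - 1)" using \<gamma>_doubles_from_covers_half_sum by simp
qed simp

lemma two_pow_le_if_not_covers_half_sum:
  assumes R: "2 \<le> R" and not_half: "\<not> covers_half_sum R"
  shows "2 * 2 ^ R \<le> 3 * b * R * R"
proof -
  obtain x where x: "2 * x \<le> S R + 1" "int x \<notin> D R"
    using not_half unfolding covers_half_sum_def by auto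
  have count: "4 * 2 ^ R \<le> 3 * S R + 3" using two_pow_le_if_notin_D[OF x(2)] x(1) by linarith
  have bR: "b * 2 \<le> b * R" using R by simp
  show ?thesis
  proof (cases "covers_below_next R")
    case False
    with R have "2 * S R + b * R \<le> 2 * a + b * R * R" by (rule S_bound_if_not_covers)
    with count bR a_less_b show ?thesis by linarith
  next
    case True
    then obtain k where k: "2 \<le> k" "k \<le> R" "k = 2 \<or> \<not> covers_below_next (k - 1)" "covers_below_next k"
      using exists_first_cover R by blast
    have "\<gamma> (Suc R) \<le> x"
      using True pos_if_notin_D[OF x(2)] x(2) unfolding covers_below_next_def by (meson not_le)
    moreover have "S R + \<gamma> (Suc k) \<le> S k + \<gamma> (Suc R)" using S_add_\<gamma>_le_if_covers k by blast
    moreover have "0 < \<gamma> (Suc k)" by (rule \<gamma>_pos) simp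
    moreover have "S k \<le> b * R * R" using S_le_at_first_cover k by blast
    ultimately show ?thesis using count x(1) by linarith
  qed
qed

end

lemma quadratic_less_two_pow:
  fixes b L K :: nat
  assumes L: "2 * b + 2 \<le> 2 ^ L" and K: "L \<le> 2 ^ K" "2 \<le> K"
  shows "3 * b * (L + 2 * K + 3) * (L + 2 * K + 3) < 2 * 2 ^ (L + 2 * K + 3)"
proof -
  define u :: nat where "u = 2 ^ K"
  define R where "R = L + 2 * K + 3"
  have u: "4 \<le> u" unfolding u_def using power_increasing[OF K(2), of "2::nat"] by simp
  have "2 * K \<le> u" unfolding u_def using K(2)
    by (induction K rule: dec_induct) auto
  then have "R \<le> 2 * u + 3" unfolding R_def using K(1) u_def by simp
  then have "R * R \<le> (2 * u + 3) * (2 * u + 3)" using mult_le_mono by blast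
  also have "\<dots> = 4 * (u * u) + 12 * u + 9" by (simp add: algebra_simps)
  also have "\<dots> \<le> 8 * (u * u)" using mult_le_mono1[OF u, of u] u by linarith
  finally have RR: "R * R \<le> 8 * (u * u)" .
  have "3 * b * R * R \<le> 3 * b * (8 * (u * u))" using RR by (simp add: mult.assoc)
  also have "\<dots> < (2 * b + 2) * (16 * (u * u))" using u by (simp add: algebra_simps)
  also have "\<dots> \<le> 2 ^ L * (16 * (u * u))" using L by (rule mult_le_mono1)
  also have "\<dots> = 2 * 2 ^ R"
    unfolding R_def u_def by (simp add: power_add power_even_eq power2_eq_square)
  finally show ?thesis unfolding R_def .
qed

lemma le_two_pow_nat_ceiling_log: "0 < y \<Longrightarrow> y \<le> 2 ^ nat \<lceil>log 2 y\<rceil>"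
proof -
  assume y: "0 < y"
  have "y = 2 powr log 2 y" using y by simp
  also have "\<dots> \<le> 2 powr real (nat \<lceil>log 2 y\<rceil>)" by (intro powr_mono) linarith+
  finally show ?thesis by (simp add: powr_realpow)
qed

lemma nat_ceiling_log_parameters:
  fixes b :: nat
  assumes "2 \<le> b"
  defines "L \<equiv> nat \<lceil>log 2 (2 * real b + 2)\<rceil>"
  defines "K \<equiv> nat \<lceil>log 2 (real L)\<rceil>"
  shows "2 * b + 2 \<le> 2 ^ L" "L \<le> 2 ^ K" "2 \<le> K"
proof -
  have "real (2 * b + 2) \<le> real (2 ^ L)"
    unfolding L_def using le_two_pow_nat_ceiling_log[of "2 * real b + 2"] by simp
  then show L: "2 * b + 2 \<le> 2 ^ L" by linarith
  with assms have "2 ^ 2 < (2::nat) ^ L" by simp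
  then have "2 < L" using power_strict_increasing_iff[of "2::nat" 2 L] by simp
  then have "real L \<le> real (2 ^ K)"
    unfolding K_def using le_two_pow_nat_ceiling_log[of "real L"] by simp
  then show K: "L \<le> 2 ^ K" by linarith
  with \<open>2 < L\<close> have "2 ^ 1 < (2::nat) ^ K" by simp
  then show "2 \<le> K" using power_strict_increasing_iff[of "2::nat" 1 K] by simp
qed

theorem corollary1:
  fixes a b :: nat
  assumes "0 < a" and "a < b"
  defines "L \<equiv> nat \<lceil>log 2 (2 * real b + 2)\<rceil>"
  defines "K \<equiv> nat \<lceil>log 2 (real L)\<rceil>"
  shows "n0 a b \<le> L + 2 * K + 5"
proof -
  interpret greedy_dissociated a b using assms(1,2) by unfold_locales
  have "2 \<le> b" using assms(1,2) by simp
  note params = nat_ceiling_log_parameters[OF this, folded L_def K_def]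
  define R where "R = L + 2 * K + 3"
  have "3 \<le> R" unfolding R_def by simp
  have "covers_half_sum R"
  proof (rule ccontr)
    assume "\<not> covers_half_sum R"
    with \<open>3 \<le> R\<close> have "2 * 2 ^ R \<le> 3 * b * R * R"
      by (intro two_pow_le_if_not_covers_half_sum) auto
    with quadratic_less_two_pow[OF params] show False unfolding R_def by linarith
  qed
  with \<open>3 \<le> R\<close> have "n0 a b \<le> R + 2" by (rule n0_le_if_covers_half_sum)
  then show ?thesis unfolding R_def by simp
qed

end
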